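(* Let $n\in\{2,3\}$. For every set $\mathcal{S}$ of five of the six orders of three labels $A,B,C$, there exist three $n$-dimensional boxes $A,B,C$ such that every order in $\mathcal{S}$ (innermost to outermost) is a possible arrangement.
   Context: An $n$-dimensional box $A$ has closed side lengths $a_1\le\dots\le a_n$ (positive reals). A state of $A$ is either closed or expanded along one side $i$: $a_i$ is replaced by $a_i'$ with $a_i\le a_i'\le 2a_i$, other sides unchanged (only one side can expand). The dimension vector of a state is its side lengths sorted non-decreasingly. A box in some state fits inside another box in some state if each coordinate of the outer one's dimension vector is strictly larger than the corresponding coordinate of the inner one's. An order $X_1,\dots,X_k$ (innermost to outermost) is a possible arrangement if each box can be given a state so that $X_j$ fits inside $X_{j+1}$ for all $j$; states may differ between arrangements. *)

theory Defs
  imports Complex_Main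
begin

text \<open>A box in dimension n is given by its closed side lengths a_1 \<le> ... \<le> a_n (positive reals),
  represented as a sorted list of length n.\<close>
definition is_box :: "nat \<Rightarrow> real list \<Rightarrow> bool" where
  "is_box n a \<longleftrightarrow> length a = n \<and> sorted a \<and> (\<forall>x\<in>set a. 0 < x)"

text \<open>s is a state of box a: closed, or expanded along exactly one side i,
  a_i replaced by a_i' with a_i \<le> a_i' \<le> 2 a_i.\<close>
definition is_state :: "real list \<Rightarrow> real list \<Rightarrow> bool" where
  "is_state a s \<longleftrightarrow> s = a \<or>
     (\<exists>i<length a. \<exists>x. a ! i \<le> x \<and> x \<le> 2 * a ! i \<and> s = a[i := x])"

definition dimvec :: "real list \<Rightarrow> real list" where
  "dimvec s = sort s"

definition fits_in :: "real list \<Rightarrow> real list \<Rightarrow> bool" where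
  "fits_in s t \<longleftrightarrow> length s = length t \<and>
     (\<forall>i<length s. dimvec s ! i < dimvec t ! i)"

definition possible_arrangement :: "real list list \<Rightarrow> bool" where
  "possible_arrangement Xs \<longleftrightarrow>
     (\<exists>ss. length ss = length Xs \<and> (\<forall>j<length Xs. is_state (Xs ! j) (ss ! j)) \<and>
        (\<forall>j. Suc j < length Xs \<longrightarrow> fits_in (ss ! j) (ss ! Suc j)))"

datatype label = LA | LB | LC

definition label_box :: "real list \<Rightarrow> real list \<Rightarrow> real list \<Rightarrow> label \<Rightarrow> real list" where
  "label_box A B C l = (case l of LA \<Rightarrow> A | LB \<Rightarrow> B | LC \<Rightarrow> C)"

definition label_orders :: "label list set" where
  "label_orders = {p. distinct p \<and> set p = {LA, LB, LC}}"

end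

theory Submission
  imports Defs
begin

text \<open>It suffices to find boxes P, Q, R for which every order except P, Q, R itself is a possible
  arrangement: renaming the labels by a permutation that sends the one excluded order of S to
  A, B, C then realises all of S. In each of the five orders the innermost box stays closed and
  each of the other two is closed or expanded along one side, chosen so that the sorted dimension
  vectors increase strictly.\<close>

lemma is_state_closed: "is_state a a"
  by (simp add: is_state_def)

lemma is_state_expand:
  "i < length a \<Longrightarrow> a ! i \<le> x \<Longrightarrow> x \<le> 2 * a ! i \<Longrightarrow> is_state a (a[i := x])"
  unfolding is_state_def by blast

lemma fits_in_iff_list_all2: "fits_in s t \<longleftrightarrow> list_all2 (<) (sort s) (sort t)"
  by (auto simp: fits_in_def dimvec_def list_all2_conv_all_nth)

lemma possible_arrangement_three:
  assumes "is_state X s" "is_state Y t" "is_state Z u" "fits_in s t" "fits_in t u"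
  shows "possible_arrangement [X, Y, Z]"
  unfolding possible_arrangement_def
  using assms by (intro exI[of _ "[s, t, u]"]) (auto simp: less_Suc_eq numeral_eq_Suc)

lemma UNIV_label: "UNIV = {LA, LB, LC}"
  using label.exhaust by auto

lemma label_orders_eq:
  "label_orders = {[LA,LB,LC], [LA,LC,LB], [LB,LA,LC], [LB,LC,LA], [LC,LA,LB], [LC,LB,LA]}"
proof -
  have "p \<in> {[LA,LB,LC], [LA,LC,LB], [LB,LA,LC], [LB,LC,LA], [LC,LA,LB], [LC,LB,LA]}"
    if "distinct p" "set p = {LA, LB, LC}" for p
  proof -
    have "length p = 3"
      using distinct_card[OF \<open>distinct p\<close>] \<open>set p = {LA, LB, LC}\<close> by simp
    then obtain x y z where "p = [x, y, z]"
      by (auto simp: numeral_eq_Suc length_Suc_conv)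
    with that show ?thesis
      by (cases x; cases y; cases z) auto
  qed
  then show ?thesis
    unfolding label_orders_def by auto
qed

lemma card_label_orders: "card label_orders = 6"
  unfolding label_orders_eq by simp

lemma map_bij_label_orders:
  assumes "bij \<sigma>" "p \<in> label_orders"
  shows "map \<sigma> p \<in> label_orders"
proof -
  have "set p = UNIV"
    using assms(2) by (simp add: label_orders_def UNIV_label)
  then have "set (map \<sigma> p) = UNIV"
    using bij_is_surj[OF assms(1)] by simp
  moreover have "distinct p"
    using assms(2) by (simp add: label_orders_def)
  then have "distinct (map \<sigma> p)"
    by (simp add: distinct_map inj_on_subset[OF bij_is_inj[OF assms(1)] subset_UNIV])
  ultimately show ?thesis
    by (simp add: label_orders_def UNIV_label)
qed

lemma label_order_to_identity:
  assumes "q \<in> label_orders"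
  obtains \<sigma> where "bij \<sigma>" "map \<sigma> q = [LA, LB, LC]"
proof -
  obtain x y z where q: "q = [x, y, z]"
    using assms by (auto simp: label_orders_eq)
  with assms have "distinct [x, y, z]" "{x, y, z} = UNIV"
    by (simp_all add: label_orders_def UNIV_label)
  define \<sigma> where "\<sigma> l = (if l = x then LA else if l = y then LB else LC)" for l
  have images: "\<sigma> x = LA" "\<sigma> y = LB" "\<sigma> z = LC"
    using \<open>distinct [x, y, z]\<close> by (auto simp: \<sigma>_def)
  have "inj \<sigma>"
  proof (rule injI)
    fix u v assume "\<sigma> u = \<sigma> v"
    moreover have "u \<in> {x, y, z}" "v \<in> {x, y, z}"
      using \<open>{x, y, z} = UNIV\<close> by auto
    ultimately show "u = v"
      using images by auto
  qed
  moreover have "surj \<sigma>"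
  proof (rule surjI)
    fix l show "\<sigma> (case l of LA \<Rightarrow> x | LB \<Rightarrow> y | LC \<Rightarrow> z) = l"
      using images by (cases l) simp_all
  qed
  ultimately have "bij \<sigma>"
    by (simp add: bij_def)
  moreover have "map \<sigma> q = [LA, LB, LC]"
    using images by (simp add: q)
  ultimately show thesis
    by (rule that)
qed

lemma label_box_comp:
  "label_box (label_box P Q R (\<sigma> LA)) (label_box P Q R (\<sigma> LB)) (label_box P Q R (\<sigma> LC))
     = label_box P Q R \<circ> \<sigma>"
proof
  fix l show "label_box (label_box P Q R (\<sigma> LA)) (label_box P Q R (\<sigma> LB))
      (label_box P Q R (\<sigma> LC)) l = (label_box P Q R \<circ> \<sigma>) l"
    by (cases l) (simp_all add: label_box_def)
qed

lemma label_box_in: "label_box P Q R l \<in> {P, Q, R}"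
  by (cases l) (simp_all add: label_box_def)

definition realisable_orders :: "real list \<Rightarrow> real list \<Rightarrow> real list \<Rightarrow> label list set" where
  "realisable_orders A B C = {p \<in> label_orders. possible_arrangement (map (label_box A B C) p)}"

lemma realisable_orders_relabel:
  assumes "q \<in> label_orders" and "label_orders - {[LA, LB, LC]} \<subseteq> realisable_orders P Q R"
  obtains A B C where "A \<in> {P, Q, R}" "B \<in> {P, Q, R}" "C \<in> {P, Q, R}"
    and "label_orders - {q} \<subseteq> realisable_orders A B C"
proof -
  obtain \<sigma> where "bij \<sigma>" and \<sigma>_q: "map \<sigma> q = [LA, LB, LC]"
    using label_order_to_identity[OF assms(1)] .
  define A B C where "A = label_box P Q R (\<sigma> LA)" "B = label_box P Q R (\<sigma> LB)"
    "C = label_box P Q R (\<sigma> LC)"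
  have relabelled: "label_box A B C = label_box P Q R \<circ> \<sigma>"
    by (simp add: A_B_C_def label_box_comp)
  have "p \<in> realisable_orders A B C" if "p \<in> label_orders - {q}" for p
  proof -
    have "map \<sigma> p \<in> label_orders"
      using map_bij_label_orders[OF \<open>bij \<sigma>\<close>] that by blast
    moreover have "map \<sigma> p \<noteq> map \<sigma> q"
      using that inj_map_eq_map[OF bij_is_inj[OF \<open>bij \<sigma>\<close>]] by blast
    ultimately have "possible_arrangement (map (label_box P Q R) (map \<sigma> p))"
      using assms(2) \<sigma>_q by (auto simp: realisable_orders_def)
    then show ?thesis
      using that by (simp add: realisable_orders_def relabelled)
  qed
  then have "label_orders - {q} \<subseteq> realisable_orders A B C"
    by blast
  moreover have "A \<in> {P, Q, R}" "B \<in> {P, Q, R}" "C \<in> {P, Q, R}"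
    unfolding A_B_C_def by (rule label_box_in)+
  ultimately show thesis
    using that by blast
qed

lemma all_but_identity_realisable:
  assumes "possible_arrangement [P, R, Q]" "possible_arrangement [Q, P, R]"
    "possible_arrangement [Q, R, P]" "possible_arrangement [R, P, Q]"
    "possible_arrangement [R, Q, P]"
  shows "label_orders - {[LA, LB, LC]} \<subseteq> realisable_orders P Q R"
  using assms by (auto simp: label_orders_eq realisable_orders_def label_box_def)

lemma all_but_identity_realisable_dim2:
  "label_orders - {[LA, LB, LC]} \<subseteq> realisable_orders [9, 11] [8, 11] [7, 10]"
proof (rule all_but_identity_realisable)
  show "possible_arrangement [[9, 11], [7, 10], [8, 11]]"
    by (rule possible_arrangement_three[OF is_state_closed
          is_state_expand[of 0 _ "49/4"] is_state_expand[of 0 _ 14]])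
      (simp_all add: fits_in_iff_list_all2)
  show "possible_arrangement [[8, 11], [9, 11], [7, 10]]"
    by (rule possible_arrangement_three[OF is_state_closed
          is_state_expand[of 1 _ "55/4"] is_state_expand[of 0 _ 14]])
      (simp_all add: fits_in_iff_list_all2)
  show "possible_arrangement [[8, 11], [7, 10], [9, 11]]"
    by (rule possible_arrangement_three[OF is_state_closed
          is_state_expand[of 0 _ "49/4"] is_state_expand[of 0 _ "27/2"]])
      (simp_all add: fits_in_iff_list_all2)
  show "possible_arrangement [[7, 10], [9, 11], [8, 11]]"
    by (rule possible_arrangement_three[OF is_state_closed is_state_closed
          is_state_expand[of 0 _ 12]])
      (simp_all add: fits_in_iff_list_all2)
  show "possible_arrangement [[7, 10], [8, 11], [9, 11]]"
    by (rule possible_arrangement_three[OF is_state_closed is_state_closed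
          is_state_expand[of 0 _ "45/4"]])
      (simp_all add: fits_in_iff_list_all2)
qed

lemma all_but_identity_realisable_dim3:
  "label_orders - {[LA, LB, LC]} \<subseteq> realisable_orders [11, 15, 17] [10, 14, 17] [11, 12, 16]"
proof (rule all_but_identity_realisable)
  show "possible_arrangement [[11, 15, 17], [11, 12, 16], [10, 14, 17]]"
    by (rule possible_arrangement_three[OF is_state_closed
          is_state_expand[of 0 _ "77/4"] is_state_expand[of 0 _ 20]])
      (simp_all add: fits_in_iff_list_all2)
  show "possible_arrangement [[10, 14, 17], [11, 15, 17], [11, 12, 16]]"
    by (rule possible_arrangement_three[OF is_state_closed
          is_state_expand[of 2 _ "85/4"] is_state_expand[of 0 _ 22]])
      (simp_all add: fits_in_iff_list_all2)
  show "possible_arrangement [[10, 14, 17], [11, 12, 16], [11, 15, 17]]"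
    by (rule possible_arrangement_three[OF is_state_closed
          is_state_expand[of 0 _ "77/4"] is_state_expand[of 0 _ 22]])
      (simp_all add: fits_in_iff_list_all2)
  show "possible_arrangement [[11, 12, 16], [11, 15, 17], [10, 14, 17]]"
    by (rule possible_arrangement_three[OF is_state_closed
          is_state_expand[of 0 _ "55/4"] is_state_expand[of 0 _ "35/2"]])
      (simp_all add: fits_in_iff_list_all2)
  show "possible_arrangement [[11, 12, 16], [10, 14, 17], [11, 15, 17]]"
    by (rule possible_arrangement_three[OF is_state_closed
          is_state_expand[of 0 _ "25/2"] is_state_expand[of 0 _ "77/4"]])
      (simp_all add: fits_in_iff_list_all2)
qed

lemma boxes_realising_all_but_identity:
  assumes "n \<in> {2, 3}"
  obtains P Q R where "is_box n P" "is_box n Q" "is_box n R"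
    and "label_orders - {[LA, LB, LC]} \<subseteq> realisable_orders P Q R"
proof -
  consider "n = 2" | "n = 3"
    using assms by blast
  then show thesis
  proof cases
    case 1
    then show thesis
      by (intro that[OF _ _ _ all_but_identity_realisable_dim2]) (simp_all add: is_box_def)
  next
    case 2
    then show thesis
      by (intro that[OF _ _ _ all_but_identity_realisable_dim3]) (simp_all add: is_box_def)
  qed
qed

theorem proposition22:
  fixes n :: nat and S :: "label list set"
  assumes "n \<in> {2, 3}"
    and "S \<subseteq> label_orders" and "card S = 5"
  shows "\<exists>A B C. is_box n A \<and> is_box n B \<and> is_box n C \<and>
           (\<forall>p\<in>S. possible_arrangement (map (label_box A B C) p))"
proof -
  obtain P Q R where boxes: "is_box n P" "is_box n Q" "is_box n R"
    and realisable: "label_orders - {[LA, LB, LC]} \<subseteq> realisable_orders P Q R"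
    using boxes_realising_all_but_identity[OF assms(1)] .
  have "S \<noteq> label_orders"
    using assms(3) card_label_orders by auto
  then obtain q where "q \<in> label_orders" and S_q: "S \<subseteq> label_orders - {q}"
    using assms(2) by blast
  then obtain A B C where ABC: "A \<in> {P, Q, R}" "B \<in> {P, Q, R}" "C \<in> {P, Q, R}"
    and "label_orders - {q} \<subseteq> realisable_orders A B C"
    using realisable_orders_relabel[OF _ realisable] by blast
  with S_q have "\<forall>p\<in>S. possible_arrangement (map (label_box A B C) p)"
    by (auto simp: realisable_orders_def)
  moreover have "is_box n A" "is_box n B" "is_box n C"
    using ABC boxes by auto
  ultimately show ?thesis
    by blast
qed

end
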